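(* Under the assumptions that $\rho^{\mathrm w}_\alpha(p_i,p_j)\in(0,\infty)$ for all $1\le i<j\le M$, $\alpha\in[0,1]$, let $w_1,\dots,w_M>0$ with $\sum_iw_i=1$ and $L^{(w)*}_{n,M}=\inf_{\delta_n}\sum_{i=1}^Mw_iL_{i,n}(\delta_n)$. Then $w_{\min}L^*_{n,M}\le L^{(w)*}_{n,M}\le w_{\max}L^*_{n,M}$ with $w_{\min}=\min_iw_i$, $w_{\max}=\max_iw_i$, and $\lim_{n\to\infty}-\frac1n\ln L^{(w)*}_{n,M}=C_M^{\mathrm w}=\min_{i<j}D_C^{\mathrm w}(\mathbb P_i,\mathbb P_j)$.
   Context: Fix $M\ge2$. Let $\mu$ be a $\sigma$-finite measure on a Polish space $\mathcal X$, $\mathbb P_1,\dots,\mathbb P_M$ probability measures with strictly positive densities $p_1,\dots,p_M$ w.r.t. $\mu$, and $\varphi\ge0$ a measurable weight with $\varphi(x_1^n)=\prod_{k=1}^n\varphi(x_k)$, $p_i(x_1^n)=\prod_kp_i(x_k)$. $\rho^{\mathrm w}_\alpha(p_i,p_j)=\int\varphi\,p_i^\alpha p_j^{1-\alpha}\,\mathrm d\mu$; $D_C^{\mathrm w}(\mathbb P_i,\mathbb P_j)=\max_{\alpha\in[0,1]}[-\ln\rho^{\mathrm w}_\alpha(p_i,p_j)]$. For measurable $\delta_n:\mathcal X^n\to\{1,\dots,M\}$, $L_{i,n}(\delta_n)=\mathbb E_{\mathbb P_i^{\otimes n}}[\varphi(X_1^n)\mathbf 1\{\delta_n(X_1^n)\ne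 i\}]$ and $L^*_{n,M}=\inf_{\delta_n}\sum_iL_{i,n}(\delta_n)$. *)

theory Defs
  imports "HOL-Analysis.Analysis" "HOL-Probability.Probability"
begin

text \<open>Weighted Chernoff coefficient
  rho^w_alpha(p_i,p_j) = integral of phi * p_i^alpha * p_j^(1-alpha) d mu
  (as an extended nonnegative real, so that finiteness can be stated).\<close>
definition wrho :: "'a measure \<Rightarrow> ('a \<Rightarrow> real) \<Rightarrow> ('a \<Rightarrow> real) \<Rightarrow> ('a \<Rightarrow> real) \<Rightarrow> real \<Rightarrow> ennreal" where
  "wrho \<mu> \<phi> pa pb \<alpha> = (\<integral>\<^sup>+ x. ennreal (\<phi> x * pa x powr \<alpha> * pb x powr (1 - \<alpha>)) \<partial>\<mu>)"

definition wchernoff :: "'a measure \<Rightarrow> ('a \<Rightarrow> real) \<Rightarrow> ('a \<Rightarrow> real) \<Rightarrow> ('a \<Rightarrow> real) \<Rightarrow> real" where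
  "wchernoff \<mu> \<phi> pa pb = (SUP \<alpha>\<in>{0..1}. - ln (enn2real (wrho \<mu> \<phi> pa pb \<alpha>)))"

definition wCM :: "'a measure \<Rightarrow> ('a \<Rightarrow> real) \<Rightarrow> (nat \<Rightarrow> 'a \<Rightarrow> real) \<Rightarrow> nat \<Rightarrow> real" where
  "wCM \<mu> \<phi> p M = Min {wchernoff \<mu> \<phi> (p i) (p j) | i j. 1 \<le> i \<and> i < j \<and> j \<le> M}"

definition sample_space :: "'a measure \<Rightarrow> nat \<Rightarrow> (nat \<Rightarrow> 'a) measure" where
  "sample_space \<mu> n = PiM {..<n} (\<lambda>_. \<mu>)"

definition tests :: "'a measure \<Rightarrow> nat \<Rightarrow> nat \<Rightarrow> ((nat \<Rightarrow> 'a) \<Rightarrow> nat) set" where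
  "tests \<mu> M n = measurable (sample_space \<mu> n) (count_space {1..M})"

definition prodP :: "'a measure \<Rightarrow> ('a \<Rightarrow> real) \<Rightarrow> nat \<Rightarrow> (nat \<Rightarrow> 'a) measure" where
  "prodP \<mu> pa n = PiM {..<n} (\<lambda>_. density \<mu> (\<lambda>x. ennreal (pa x)))"

definition Lerr :: "'a measure \<Rightarrow> ('a \<Rightarrow> real) \<Rightarrow> (nat \<Rightarrow> 'a \<Rightarrow> real) \<Rightarrow> nat \<Rightarrow> nat \<Rightarrow> ((nat \<Rightarrow> 'a) \<Rightarrow> nat) \<Rightarrow> real" where
  "Lerr \<mu> \<phi> p i n \<delta> =
     (\<integral>x. (\<Prod>k<n. \<phi> (x k)) * (if \<delta> x \<noteq> i then 1 else 0) \<partial>(prodP \<mu> (p i) n))"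

definition Lstar_w :: "'a measure \<Rightarrow> ('a \<Rightarrow> real) \<Rightarrow> (nat \<Rightarrow> 'a \<Rightarrow> real) \<Rightarrow> nat \<Rightarrow> (nat \<Rightarrow> real) \<Rightarrow> nat \<Rightarrow> real" where
  "Lstar_w \<mu> \<phi> p M w n = (INF \<delta>\<in>tests \<mu> M n. \<Sum>i\<in>{1..M}. w i * Lerr \<mu> \<phi> p i n \<delta>)"

definition Lstar :: "'a measure \<Rightarrow> ('a \<Rightarrow> real) \<Rightarrow> (nat \<Rightarrow> 'a \<Rightarrow> real) \<Rightarrow> nat \<Rightarrow> nat \<Rightarrow> real" where
  "Lstar \<mu> \<phi> p M n = (INF \<delta>\<in>tests \<mu> M n. \<Sum>i\<in>{1..M}. Lerr \<mu> \<phi> p i n \<delta>)"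

end

theory Submission
  imports Defs "HOL-Real_Asymp.Real_Asymp"
begin

(* For two densities let rho(alpha) = integral of phi * pa^alpha * pb^(1 - alpha), so that
   exp (- D_C) = min rho, and consider the error of the likelihood-ratio test,
   integral of phi^n * min (pa^n, pb^n).  Since min (u, v) <= u^alpha v^(1 - alpha), this error is at
   most rho(alpha)^n = exp (- n D_C).  Conversely, splitting the integrand of rho(alpha)^n according
   to the size of the log-likelihood ratio bounds rho(alpha)^n by exp (n eta) times that error plus
   the tilted terms exp (- n t eta / alpha) rho(alpha + t)^n and exp (- n t eta / (1 - alpha)) rho(alpha - t)^n.
   As rho is smooth, alpha and t can be chosen to make both negligible, so the error is at least
   exp (- n (D_C + eta)) / 2 for large n.

   For M hypotheses, L_a + L_b dominates the pairwise error for every test, which gives the lower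
   bound through the pair attaining C_M.  The maximum-likelihood test errs under P_i only where some
   other likelihood is at least as large, so its total risk is at most
   M * #pairs * exp (- n C_M).  Positive weights change the risk by the factors w_min and w_max only. *)

lemma cosh_mult_le:
  fixes c u :: real
  assumes "0 \<le> c" "c \<le> 1"
  shows "cosh (c * u) \<le> c\<^sup>2 * cosh u + (1 - c\<^sup>2)"
proof -
  let ?a = "\<lambda>n. if even n then (c * u) ^ n /\<^sub>R fact n else 0"
  let ?b = "\<lambda>n. c\<^sup>2 * (if even n then u ^ n /\<^sub>R fact n else 0) + (if n = 0 then 1 - c\<^sup>2 else 0)"
  have "?b sums (c\<^sup>2 * cosh u + (1 - c\<^sup>2))"
    by (intro sums_add sums_mult cosh_converges sums_single[of 0 "\<lambda>_. 1 - c\<^sup>2", simplified])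
  moreover have "?a n \<le> ?b n" for n
  proof (cases "even n \<and> n \<noteq> 0")
    case True
    then have "2 \<le> n" by presburger
    then have "c ^ n * u ^ n \<le> c\<^sup>2 * u ^ n"
      using True assms by (intro mult_right_mono power_decreasing) (auto simp: zero_le_even_power)
    then show ?thesis using True by (simp add: power_mult_distrib divide_right_mono)
  qed auto
  ultimately show ?thesis by (intro sums_le[OF _ cosh_converges]) auto
qed

(* The penalised values at the tilted exponents alpha + t1 and alpha - t2 stay below R alpha; this makes
   the last two terms of exp_convex_comb_le_three_terms negligible after integration. *)
definition tilt_parameters :: "(real \<Rightarrow> real) \<Rightarrow> real \<Rightarrow> real \<Rightarrow> real \<Rightarrow> real \<Rightarrow> bool" where
  "tilt_parameters R \<eta> \<alpha> t\<^sub>1 t\<^sub>2 \<longleftrightarrow> 0 < \<alpha> \<and> \<alpha> < 1 \<and> 0 < t\<^sub>1 \<and> \<alpha> + t\<^sub>1 \<le> 1 \<and> 0 < t\<^sub>2 \<and> t\<^sub>2 \<le> \<alpha> \<and>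
     exp (- (t\<^sub>1 * (\<eta> / \<alpha>))) * R (\<alpha> + t\<^sub>1) < R \<alpha> \<and> exp (- (t\<^sub>2 * (\<eta> / (1 - \<alpha>)))) * R (\<alpha> - t\<^sub>2) < R \<alpha>"

lemma tilt_parameters_reflect:
  "tilt_parameters (\<lambda>\<beta>. R (1 - \<beta>)) \<eta> \<alpha> t\<^sub>1 t\<^sub>2 \<Longrightarrow> tilt_parameters R \<eta> (1 - \<alpha>) t\<^sub>2 t\<^sub>1"
  unfolding tilt_parameters_def by (simp add: algebra_simps)

lemma tilt_parameters_at_left_end:
  assumes pos: "\<And>\<beta>. \<beta> \<in> {0..1} \<Longrightarrow> 0 < R \<beta>"
    and min0: "\<And>\<beta>. \<beta> \<in> {0..1} \<Longrightarrow> R 0 \<le> R \<beta>"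
    and "0 < \<eta>"
  shows "\<exists>\<alpha> t\<^sub>1 t\<^sub>2. tilt_parameters R \<eta> \<alpha> t\<^sub>1 t\<^sub>2"
proof -
  (* alpha = s small: the step down to 0 is free since R 0 is minimal, and the penalty on the step
     up to 1 vanishes as s tends to 0. *)
  have "0 < R 0" "0 < R 1" using pos by auto
  then have "\<forall>\<^sub>F s in at_right 0. exp (- ((1 - s) * (\<eta> / s))) * R 1 < R 0"
    using \<open>0 < \<eta>\<close> by real_asymp
  moreover have "\<forall>\<^sub>F s in at_right 0. 0 < s \<and> s < (1::real)"
    unfolding eventually_at_right_field by (intro exI[of _ 1]) simp
  ultimately have "\<forall>\<^sub>F s in at_right 0. exp (- ((1 - s) * (\<eta> / s))) * R 1 < R 0 \<and> (0 < s \<and> s < 1)"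
    by (rule eventually_conj)
  then obtain s where s: "0 < s" "s < 1" and small: "exp (- ((1 - s) * (\<eta> / s))) * R 1 < R 0"
    using eventually_happens'[OF trivial_limit_at_right_real] by blast
  have "R 0 \<le> R s" using s min0 by auto
  moreover have "exp (- (s * (\<eta> / (1 - s)))) * R 0 < R 0"
    using s \<open>0 < \<eta>\<close> \<open>0 < R 0\<close> by simp
  ultimately have "tilt_parameters R \<eta> s (1 - s) s"
    using s small unfolding tilt_parameters_def by simp
  then show ?thesis by blast
qed

lemma tilt_parameters_at_interior_min:
  assumes pos: "\<And>\<beta>. \<beta> \<in> {0..1} \<Longrightarrow> 0 < R \<beta>"
    and second_difference: "\<And>\<alpha> \<delta> t. 0 < \<delta> \<Longrightarrow> 0 \<le> \<alpha> - \<delta> \<Longrightarrow> \<alpha> + \<delta> \<le> 1 \<Longrightarrow> 0 \<le> t \<Longrightarrow> t \<le> \<delta> \<Longrightarrow>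
       R (\<alpha> + t) + R (\<alpha> - t) - 2 * R \<alpha> \<le> (t / \<delta>)\<^sup>2 * (R (\<alpha> + \<delta>) + R (\<alpha> - \<delta>) - 2 * R \<alpha>)"
    and a: "0 < a" "a < 1" and amin: "\<And>\<beta>. \<beta> \<in> {0..1} \<Longrightarrow> R a \<le> R \<beta>"
    and "0 < \<eta>"
  shows "\<exists>t. tilt_parameters R \<eta> a t t"
proof -
  define \<delta> where "\<delta> = min a (1 - a)"
  define C where "C = (R (a + \<delta>) + R (a - \<delta>)) / \<delta>\<^sup>2"
  have \<delta>: "0 < \<delta>" "0 \<le> a - \<delta>" "a + \<delta> \<le> 1" using a unfolding \<delta>_def by auto
  have Ra: "0 < R a" using pos a by simp
  have quadratic: "R (a + t) \<le> R a + t\<^sup>2 * C \<and> R (a - t) \<le> R a + t\<^sup>2 * C" if "0 \<le> t" "t \<le> \<delta>" for t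
  proof -
    have "R (a + t) + R (a - t) - 2 * R a \<le> (t / \<delta>)\<^sup>2 * (R (a + \<delta>) + R (a - \<delta>) - 2 * R a)"
      using second_difference \<delta> that by blast
    also have "\<dots> \<le> t\<^sup>2 * C"
      using Ra unfolding C_def by (simp add: power_divide divide_right_mono mult_left_mono)
    finally show ?thesis using amin[of "a + t"] amin[of "a - t"] that \<delta> by simp
  qed
  (* R (a +- t) exceeds R a by O(t^2) only, while the penalty factors are 1 - Theta(t). *)
  define \<kappa>\<^sub>1 \<kappa>\<^sub>2 where "\<kappa>\<^sub>1 = \<eta> / a" and "\<kappa>\<^sub>2 = \<eta> / (1 - a)"
  have "0 < \<kappa>\<^sub>1" "0 < \<kappa>\<^sub>2" using a \<open>0 < \<eta>\<close> unfolding \<kappa>\<^sub>1_def \<kappa>\<^sub>2_def by auto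
  have decay: "\<forall>\<^sub>F t in at_right 0. exp (- (t * \<kappa>)) * (r + t\<^sup>2 * C) < r"
    if "0 < \<kappa>" "0 < r" for \<kappa> r :: real
    using that by real_asymp
  have "\<forall>\<^sub>F t in at_right 0. exp (- (t * \<kappa>\<^sub>1)) * (R a + t\<^sup>2 * C) < R a \<and>
      exp (- (t * \<kappa>\<^sub>2)) * (R a + t\<^sup>2 * C) < R a"
    using Ra \<open>0 < \<kappa>\<^sub>1\<close> \<open>0 < \<kappa>\<^sub>2\<close> by (intro eventually_conj decay)
  moreover have "\<forall>\<^sub>F t in at_right 0. 0 < t \<and> t \<le> \<delta>"
    unfolding eventually_at_right_field using \<delta> by (intro exI[of _ \<delta>]) simp
  ultimately have "\<forall>\<^sub>F t in at_right 0. (exp (- (t * \<kappa>\<^sub>1)) * (R a + t\<^sup>2 * C) < R a \<and>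
      exp (- (t * \<kappa>\<^sub>2)) * (R a + t\<^sup>2 * C) < R a) \<and> (0 < t \<and> t \<le> \<delta>)"
    by (rule eventually_conj)
  then obtain t where t: "0 < t" "t \<le> \<delta>"
    and small: "exp (- (t * \<kappa>\<^sub>1)) * (R a + t\<^sup>2 * C) < R a" "exp (- (t * \<kappa>\<^sub>2)) * (R a + t\<^sup>2 * C) < R a"
    using eventually_happens'[OF trivial_limit_at_right_real] by blast
  have "exp (- (t * \<kappa>\<^sub>1)) * R (a + t) < R a" "exp (- (t * \<kappa>\<^sub>2)) * R (a - t) < R a"
    using quadratic[of t] t small by (meson exp_gt_zero less_imp_le mult_left_mono order_le_less_trans)+
  then have "tilt_parameters R \<eta> a t t"
    using a t \<delta> unfolding tilt_parameters_def \<kappa>\<^sub>1_def \<kappa>\<^sub>2_def by simp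
  then show ?thesis ..
qed

lemma exists_tilt_parameters:
  assumes "continuous_on {0..1} R"
    and pos: "\<And>\<beta>. \<beta> \<in> {0..1} \<Longrightarrow> 0 < R \<beta>"
    and second_difference: "\<And>\<alpha> \<delta> t. 0 < \<delta> \<Longrightarrow> 0 \<le> \<alpha> - \<delta> \<Longrightarrow> \<alpha> + \<delta> \<le> 1 \<Longrightarrow> 0 \<le> t \<Longrightarrow> t \<le> \<delta> \<Longrightarrow>
       R (\<alpha> + t) + R (\<alpha> - t) - 2 * R \<alpha> \<le> (t / \<delta>)\<^sup>2 * (R (\<alpha> + \<delta>) + R (\<alpha> - \<delta>) - 2 * R \<alpha>)"
    and "0 < \<eta>"
  shows "\<exists>\<alpha> t\<^sub>1 t\<^sub>2. tilt_parameters R \<eta> \<alpha> t\<^sub>1 t\<^sub>2"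
proof -
  obtain a where a: "a \<in> {0..1}" and amin: "\<And>\<beta>. \<beta> \<in> {0..1} \<Longrightarrow> R a \<le> R \<beta>"
    using continuous_attains_inf[OF compact_Icc _ \<open>continuous_on {0..1} R\<close>] by auto
  consider "a = 0" | "a = 1" | "0 < a \<and> a < 1" using a by fastforce
  then show ?thesis
  proof cases
    case 1
    then show ?thesis using tilt_parameters_at_left_end[of R] pos amin \<open>0 < \<eta>\<close> by blast
  next
    case 2
    have "\<exists>\<alpha> t\<^sub>1 t\<^sub>2. tilt_parameters (\<lambda>\<beta>. R (1 - \<beta>)) \<eta> \<alpha> t\<^sub>1 t\<^sub>2"
      using 2 amin pos \<open>0 < \<eta>\<close> by (intro tilt_parameters_at_left_end) auto
    then show ?thesis using tilt_parameters_reflect by blast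
  next
    case 3
    then show ?thesis using tilt_parameters_at_interior_min[OF pos second_difference] amin \<open>0 < \<eta>\<close> by blast
  qed
qed

lemma exp_convex_comb_le_three_terms:
  fixes a b \<alpha> t\<^sub>1 t\<^sub>2 c :: real
  assumes \<alpha>: "0 < \<alpha>" "\<alpha> < 1" and "0 < t\<^sub>1" "0 < t\<^sub>2"
  shows "exp (\<alpha> * a + (1 - \<alpha>) * b) \<le> exp c * min (exp a) (exp b)
      + exp (- (t\<^sub>1 * (c / \<alpha>))) * exp ((\<alpha> + t\<^sub>1) * a + (1 - (\<alpha> + t\<^sub>1)) * b)
      + exp (- (t\<^sub>2 * (c / (1 - \<alpha>)))) * exp ((\<alpha> - t\<^sub>2) * a + (1 - (\<alpha> - t\<^sub>2)) * b)"
    (is "exp ?B \<le> ?T\<^sub>0 + ?T\<^sub>1 + ?T\<^sub>2")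
proof -
  have "exp ?B \<le> ?T\<^sub>0 \<or> exp ?B \<le> ?T\<^sub>1 \<or> exp ?B \<le> ?T\<^sub>2"
  proof (cases "c < \<alpha> * (a - b)")
    case True
    then have "t\<^sub>1 * (c / \<alpha>) \<le> t\<^sub>1 * (a - b)"
      using \<alpha> \<open>0 < t\<^sub>1\<close> by (intro mult_left_mono) (auto simp: divide_le_eq mult.commute)
    then have "?B \<le> - (t\<^sub>1 * (c / \<alpha>)) + ((\<alpha> + t\<^sub>1) * a + (1 - (\<alpha> + t\<^sub>1)) * b)"
      by (simp add: algebra_simps)
    then show ?thesis by (simp flip: exp_add)
  next
    case c1: False
    show ?thesis
    proof (cases "(1 - \<alpha>) * (a - b) < - c")
      case True
      then have "c / (1 - \<alpha>) < b - a"
        using \<alpha> by (subst pos_divide_less_eq) (auto simp: algebra_simps)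
      then have "t\<^sub>2 * (c / (1 - \<alpha>)) \<le> t\<^sub>2 * (b - a)"
        using \<open>0 < t\<^sub>2\<close> by (intro mult_left_mono) auto
      then have "?B \<le> - (t\<^sub>2 * (c / (1 - \<alpha>))) + ((\<alpha> - t\<^sub>2) * a + (1 - (\<alpha> - t\<^sub>2)) * b)"
        by (simp add: algebra_simps)
      then show ?thesis by (simp flip: exp_add)
    next
      case False
      then have "?B \<le> c + a" "?B \<le> c + b" using c1 by (simp_all add: algebra_simps)
      then show ?thesis by (simp add: min_mult_distrib_left flip: exp_add)
    qed
  qed
  then show ?thesis by (smt (verit) exp_gt_zero min.cobounded1 min_def mult_pos_pos)
qed

lemma exponent_tendsto_of_exp_bounds:
  fixes L :: "nat \<Rightarrow> real" and C K c :: real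
  assumes upper: "\<And>n. L n \<le> K * exp (- C) ^ n"
    and lower: "\<And>\<eta>. 0 < \<eta> \<Longrightarrow> \<forall>\<^sub>F n in sequentially. c * exp (- (C + \<eta>)) ^ n \<le> L n"
    and "0 < c"
  shows "(\<lambda>n. - (1 / real n) * ln (L n)) \<longlonglongrightarrow> C"
proof (rule order_tendstoI)
  have L_pos: "\<forall>\<^sub>F n in sequentially. 0 < L n"
    using lower[OF zero_less_one] by (rule eventually_mono) (use \<open>0 < c\<close> in \<open>smt (verit) exp_gt_zero mult_pos_pos zero_less_power\<close>)
  then obtain n where "0 < L n" by (metis eventually_sequentially order_refl)
  then have "0 < K" using upper[of n] by (smt (verit) exp_gt_zero mult_nonpos_nonneg zero_le_power)
  fix a assume "a < C"
  have "\<forall>\<^sub>F n in sequentially. ln K / real n < C - a"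
    using order_tendstoD(2)[OF lim_const_over_n[of "ln K"]] \<open>a < C\<close> by simp
  with L_pos eventually_gt_at_top[of 0]
  show "\<forall>\<^sub>F n in sequentially. a < - (1 / real n) * ln (L n)"
  proof eventually_elim
    case (elim n)
    have "ln (L n) \<le> ln (K * exp (- C) ^ n)" using upper[of n] elim \<open>0 < K\<close> by simp
    also have "\<dots> = ln K - real n * C" using \<open>0 < K\<close> by (simp add: ln_mult ln_realpow)
    finally have "(real n * C - ln K) / real n \<le> - ln (L n) / real n"
      using elim by (intro divide_right_mono) auto
    then have "C - ln K / real n \<le> - (1 / real n) * ln (L n)"
      using elim by (simp add: diff_divide_distrib)
    then show ?case using elim by linarith
  qed
next
  fix b assume "C < b"
  define \<eta> where "\<eta> = (b - C) / 2"
  have "0 < \<eta>" using \<open>C < b\<close> unfolding \<eta>_def by simp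
  have "\<forall>\<^sub>F n in sequentially. - (ln c / real n) < \<eta>"
    using order_tendstoD(2)[OF lim_const_over_n[of "- ln c"] \<open>0 < \<eta>\<close>] by simp
  with lower[OF \<open>0 < \<eta>\<close>] eventually_gt_at_top[of 0]
  show "\<forall>\<^sub>F n in sequentially. - (1 / real n) * ln (L n) < b"
  proof eventually_elim
    case (elim n)
    have "ln c - real n * (C + \<eta>) = ln (c * exp (- (C + \<eta>)) ^ n)"
      using \<open>0 < c\<close> by (simp add: ln_mult ln_realpow algebra_simps)
    also have "\<dots> \<le> ln (L n)" using elim \<open>0 < c\<close> by (intro ln_mono) auto
    finally have "- (1 / real n) * ln (L n) \<le> C + \<eta> - ln c / real n"
      using elim by (simp add: field_simps)
    moreover have "C + 2 * \<eta> = b" unfolding \<eta>_def by (simp add: field_simps)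
    ultimately show ?case using elim(3) by linarith
  qed
qed

lemma INF_weighted_sum_ge:
  fixes L :: "'i \<Rightarrow> 'd \<Rightarrow> real"
  assumes "T \<noteq> {}" and L: "\<And>i \<delta>. i \<in> I \<Longrightarrow> \<delta> \<in> T \<Longrightarrow> 0 \<le> L i \<delta>"
    and w: "\<And>i. i \<in> I \<Longrightarrow> c \<le> w i" and "0 \<le> c"
  shows "c * (INF \<delta>\<in>T. \<Sum>i\<in>I. L i \<delta>) \<le> (INF \<delta>\<in>T. \<Sum>i\<in>I. w i * L i \<delta>)"
proof (rule cINF_greatest[OF \<open>T \<noteq> {}\<close>])
  fix \<delta> assume "\<delta> \<in> T"
  have "(INF \<delta>\<in>T. \<Sum>i\<in>I. L i \<delta>) \<le> (\<Sum>i\<in>I. L i \<delta>)"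
    using \<open>\<delta> \<in> T\<close> L by (intro cINF_lower bdd_belowI2[of _ 0] sum_nonneg) auto
  then have "c * (INF \<delta>\<in>T. \<Sum>i\<in>I. L i \<delta>) \<le> (\<Sum>i\<in>I. c * L i \<delta>)"
    unfolding sum_distrib_left[symmetric] using \<open>0 \<le> c\<close> by (rule mult_left_mono)
  also have "\<dots> \<le> (\<Sum>i\<in>I. w i * L i \<delta>)"
    using w L \<open>\<delta> \<in> T\<close> by (intro sum_mono mult_right_mono) auto
  finally show "c * (INF \<delta>\<in>T. \<Sum>i\<in>I. L i \<delta>) \<le> (\<Sum>i\<in>I. w i * L i \<delta>)" .
qed

lemma INF_weighted_sum_le:
  fixes L :: "'i \<Rightarrow> 'd \<Rightarrow> real"
  assumes "T \<noteq> {}" and L: "\<And>i \<delta>. i \<in> I \<Longrightarrow> \<delta> \<in> T \<Longrightarrow> 0 \<le> L i \<delta>"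
    and w: "\<And>i. i \<in> I \<Longrightarrow> 0 \<le> w i" "\<And>i. i \<in> I \<Longrightarrow> w i \<le> c" and "0 < c"
  shows "(INF \<delta>\<in>T. \<Sum>i\<in>I. w i * L i \<delta>) \<le> c * (INF \<delta>\<in>T. \<Sum>i\<in>I. L i \<delta>)"
proof -
  have "(INF \<delta>\<in>T. \<Sum>i\<in>I. w i * L i \<delta>) / c \<le> (INF \<delta>\<in>T. \<Sum>i\<in>I. L i \<delta>)"
  proof (rule cINF_greatest[OF \<open>T \<noteq> {}\<close>])
    fix \<delta> assume "\<delta> \<in> T"
    have "(INF \<delta>\<in>T. \<Sum>i\<in>I. w i * L i \<delta>) \<le> (\<Sum>i\<in>I. w i * L i \<delta>)"
      using \<open>\<delta> \<in> T\<close> L w by (intro cINF_lower bdd_belowI2[of _ 0] sum_nonneg mult_nonneg_nonneg) auto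
    also have "\<dots> \<le> c * (\<Sum>i\<in>I. L i \<delta>)"
      unfolding sum_distrib_left using w L \<open>\<delta> \<in> T\<close> by (intro sum_mono mult_right_mono) auto
    finally show "(INF \<delta>\<in>T. \<Sum>i\<in>I. w i * L i \<delta>) / c \<le> (\<Sum>i\<in>I. L i \<delta>)"
      using \<open>0 < c\<close> by (simp add: divide_le_eq mult.commute)
  qed
  then show ?thesis using \<open>0 < c\<close> by (simp add: divide_le_eq mult.commute)
qed

section \<open>Products of densities\<close>

lemma nn_integral_PiM_prod_power:
  assumes "sigma_finite_measure \<mu>" "f \<in> borel_measurable \<mu>"
  shows "(\<integral>\<^sup>+x. (\<Prod>k<n. f (x k)) \<partial>PiM {..<n} (\<lambda>_. \<mu>)) = (\<integral>\<^sup>+x. f x \<partial>\<mu>) ^ n"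
proof -
  interpret product_sigma_finite "\<lambda>_. \<mu>"
    using assms(1) by (simp add: product_sigma_finite_def)
  show ?thesis using product_nn_integral_prod[of "{..<n}" "\<lambda>_. f"] assms(2) by simp
qed

lemma PiM_density:
  fixes f :: "'i \<Rightarrow> 'a \<Rightarrow> ennreal"
  assumes "product_sigma_finite M" "finite I"
    and f: "\<And>i. f i \<in> borel_measurable (M i)" "\<And>i x. f i x \<noteq> \<infinity>"
  shows "PiM I (\<lambda>i. density (M i) (f i)) = density (PiM I M) (\<lambda>x. \<Prod>i\<in>I. f i (x i))"
proof -
  interpret M: product_sigma_finite M by fact
  interpret D: product_sigma_finite "\<lambda>i. density (M i) (f i)"
    unfolding product_sigma_finite_def
    using f by (simp add: M.sigma_finite_measure_axioms sigma_finite_measure.sigma_finite_iff_density_finite)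
  note [measurable] = f(1)
  show ?thesis
  proof (rule D.PiM_eqI[symmetric])
    show "finite I" by fact
    show "sets (density (PiM I M) (\<lambda>x. \<Prod>i\<in>I. f i (x i))) = sets (PiM I (\<lambda>i. density (M i) (f i)))"
      by (subst sets_density, rule sets_PiM_cong) auto
  next
    fix A assume A: "\<And>i. i \<in> I \<Longrightarrow> A i \<in> sets (density (M i) (f i))"
    then have [measurable]: "\<And>i. i \<in> I \<Longrightarrow> A i \<in> sets (M i)" by simp
    have "Pi\<^sub>E I A \<in> sets (PiM I M)" using \<open>finite I\<close> by (intro sets_PiM_I_finite) auto
    then have "emeasure (density (PiM I M) (\<lambda>x. \<Prod>i\<in>I. f i (x i))) (Pi\<^sub>E I A)
        = (\<integral>\<^sup>+x. (\<Prod>i\<in>I. f i (x i)) * indicator (Pi\<^sub>E I A) x \<partial>PiM I M)"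
      by (subst emeasure_density) auto
    also have "\<dots> = (\<integral>\<^sup>+x. (\<Prod>i\<in>I. f i (x i) * indicator (A i) (x i)) \<partial>PiM I M)"
    proof (rule nn_integral_cong)
      fix x assume "x \<in> space (PiM I M)"
      then have "indicator (Pi\<^sub>E I A) x = (\<Prod>i\<in>I. indicator (A i) (x i) :: ennreal)"
        using \<open>finite I\<close> by (auto simp: space_PiM PiE_iff indicator_def)
      then show "(\<Prod>i\<in>I. f i (x i)) * indicator (Pi\<^sub>E I A) x = (\<Prod>i\<in>I. f i (x i) * indicator (A i) (x i))"
        by (simp add: prod.distrib)
    qed
    also have "\<dots> = (\<Prod>i\<in>I. \<integral>\<^sup>+y. f i y * indicator (A i) y \<partial>M i)"
      using \<open>finite I\<close> by (subst M.product_nn_integral_prod) auto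
    also have "\<dots> = (\<Prod>i\<in>I. emeasure (density (M i) (f i)) (A i))"
      by (intro prod.cong refl) (simp add: emeasure_density)
    finally show "emeasure (density (PiM I M) (\<lambda>x. \<Prod>i\<in>I. f i (x i))) (Pi\<^sub>E I A)
        = (\<Prod>i\<in>I. emeasure (density (M i) (f i)) (A i))" .
  qed
qed

section \<open>Chernoff bounds for two densities\<close>

(* Total weighted error of the likelihood-ratio test between pa and pb. *)
definition pair_risk :: "'a measure \<Rightarrow> ('a \<Rightarrow> real) \<Rightarrow> ('a \<Rightarrow> real) \<Rightarrow> ('a \<Rightarrow> real) \<Rightarrow> nat \<Rightarrow> ennreal" where
  "pair_risk \<mu> \<phi> pa pb n =
     (\<integral>\<^sup>+x. ennreal (min (\<Prod>k<n. \<phi> (x k) * pa (x k)) (\<Prod>k<n. \<phi> (x k) * pb (x k))) \<partial>PiM {..<n} (\<lambda>_. \<mu>))"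

locale chernoff_pair =
  fixes \<mu> :: "'a measure" and \<phi> pa pb :: "'a \<Rightarrow> real"
  assumes sigma_finite: "sigma_finite_measure \<mu>"
    and phi_measurable [measurable]: "\<phi> \<in> borel_measurable \<mu>"
    and pa_measurable [measurable]: "pa \<in> borel_measurable \<mu>"
    and pb_measurable [measurable]: "pb \<in> borel_measurable \<mu>"
    and phi_nonneg: "\<And>x. 0 \<le> \<phi> x" and pa_pos: "\<And>x. 0 < pa x" and pb_pos: "\<And>x. 0 < pb x"
    and wrho_pos_finite: "\<And>\<beta>. \<beta> \<in> {0..1} \<Longrightarrow> 0 < wrho \<mu> \<phi> pa pb \<beta> \<and> wrho \<mu> \<phi> pa pb \<beta> < \<infinity>"
begin

abbreviation chernoff :: real where
  "chernoff \<equiv> wchernoff \<mu> \<phi> pa pb"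

definition tilted :: "real \<Rightarrow> 'a \<Rightarrow> real" where
  "tilted \<beta> y = \<phi> y * exp (\<beta> * ln (pa y) + (1 - \<beta>) * ln (pb y))"

definition rho :: "real \<Rightarrow> real" where
  "rho \<beta> = (\<integral>y. tilted \<beta> y \<partial>\<mu>)"

lemma tilted_eq_powr: "tilted \<beta> y = \<phi> y * pa y powr \<beta> * pb y powr (1 - \<beta>)"
  using pa_pos[of y] pb_pos[of y] by (simp add: tilted_def powr_def exp_add)

lemma tilted_one: "tilted 1 y = \<phi> y * pa y" and tilted_zero: "tilted 0 y = \<phi> y * pb y"
  using pa_pos[of y] pb_pos[of y] by (simp_all add: tilted_def)

lemma tilted_nonneg: "0 \<le> tilted \<beta> y"
  unfolding tilted_def using phi_nonneg by simp

lemma tilted_measurable [measurable]: "tilted \<beta> \<in> borel_measurable \<mu>"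
  unfolding tilted_def by measurable

lemma tilted_shift: "tilted (\<beta> + s) y = tilted \<beta> y * exp (s * (ln (pa y) - ln (pb y)))"
  unfolding tilted_def by (simp add: algebra_simps flip: exp_add)

lemma wrho_eq_nn_integral_tilted: "wrho \<mu> \<phi> pa pb \<beta> = (\<integral>\<^sup>+y. tilted \<beta> y \<partial>\<mu>)"
  unfolding wrho_def tilted_eq_powr ..

lemma integrable_tilted: "\<beta> \<in> {0..1} \<Longrightarrow> integrable \<mu> (tilted \<beta>)"
  using wrho_pos_finite tilted_nonneg
  by (intro integrableI_nonneg) (auto simp: wrho_eq_nn_integral_tilted)

lemma wrho_eq_rho: "\<beta> \<in> {0..1} \<Longrightarrow> wrho \<mu> \<phi> pa pb \<beta> = ennreal (rho \<beta>)"
  unfolding wrho_eq_nn_integral_tilted rho_def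
  using integrable_tilted tilted_nonneg by (intro nn_integral_eq_integral) auto

lemma rho_pos: "\<beta> \<in> {0..1} \<Longrightarrow> 0 < rho \<beta>"
  using wrho_pos_finite wrho_eq_rho by (metis ennreal_less_zero_iff)

lemma tilted_le: "\<beta> \<in> {0..1} \<Longrightarrow> tilted \<beta> y \<le> tilted 0 y + tilted 1 y"
proof -
  assume "\<beta> \<in> {0..1}"
  define a b where "a = ln (pa y)" and "b = ln (pb y)"
  have "\<beta> * a + (1 - \<beta>) * b \<le> \<beta> * max a b + (1 - \<beta>) * max a b"
    using \<open>\<beta> \<in> {0..1}\<close> by (intro add_mono mult_left_mono) auto
  then have "exp (\<beta> * a + (1 - \<beta>) * b) \<le> exp (max a b)"
    by (simp add: algebra_simps)
  also have "\<dots> \<le> exp b + exp a"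
    by (simp add: max_def add_increasing add_increasing2)
  finally have "\<phi> y * exp (\<beta> * a + (1 - \<beta>) * b) \<le> \<phi> y * (exp b + exp a)"
    using phi_nonneg by (rule mult_left_mono)
  then show ?thesis
    unfolding tilted_def a_def b_def by (simp add: distrib_left)
qed

lemma continuous_on_rho: "continuous_on {0..1} rho"
proof (rule continuous_on_sequentiallyI)
  fix u :: "nat \<Rightarrow> real" and \<beta>
  assume u: "\<forall>n. u n \<in> {0..1}" and "u \<longlonglongrightarrow> \<beta>"
  show "(\<lambda>n. rho (u n)) \<longlonglongrightarrow> rho \<beta>"
    unfolding rho_def
  proof (rule integral_dominated_convergence[where w = "\<lambda>y. tilted 0 y + tilted 1 y"])
    show "integrable \<mu> (\<lambda>y. tilted 0 y + tilted 1 y)"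
      by (intro Bochner_Integration.integrable_add integrable_tilted) auto
    show "AE y in \<mu>. (\<lambda>n. tilted (u n) y) \<longlonglongrightarrow> tilted \<beta> y"
      unfolding tilted_def using \<open>u \<longlonglongrightarrow> \<beta>\<close> by (intro AE_I2 tendsto_intros)
    show "\<And>n. AE y in \<mu>. norm (tilted (u n) y) \<le> tilted 0 y + tilted 1 y"
      using u tilted_nonneg tilted_le by auto
  qed auto
qed

lemma tilted_second_difference:
  assumes "0 < \<delta>" "0 \<le> t" "t \<le> \<delta>"
  shows "tilted (\<alpha> + t) y + tilted (\<alpha> - t) y - 2 * tilted \<alpha> y
    \<le> (t / \<delta>)\<^sup>2 * (tilted (\<alpha> + \<delta>) y + tilted (\<alpha> - \<delta>) y - 2 * tilted \<alpha> y)"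
proof -
  define L where "L = ln (pa y) - ln (pb y)"
  have second_difference: "tilted (\<alpha> + s) y + tilted (\<alpha> - s) y - 2 * tilted \<alpha> y = 2 * tilted \<alpha> y * (cosh (s * L) - 1)" for s
    using tilted_shift[of \<alpha> s y] tilted_shift[of \<alpha> "- s" y]
    unfolding L_def by (simp add: cosh_field_def algebra_simps)
  have "cosh ((t / \<delta>) * (\<delta> * L)) \<le> (t / \<delta>)\<^sup>2 * cosh (\<delta> * L) + (1 - (t / \<delta>)\<^sup>2)"
    using assms by (intro cosh_mult_le) auto
  then have "cosh (t * L) - 1 \<le> (t / \<delta>)\<^sup>2 * (cosh (\<delta> * L) - 1)"
    using \<open>0 < \<delta>\<close> by (simp add: algebra_simps)
  then have "2 * tilted \<alpha> y * (cosh (t * L) - 1) \<le> (t / \<delta>)\<^sup>2 * (2 * tilted \<alpha> y * (cosh (\<delta> * L) - 1))"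
    using tilted_nonneg[of \<alpha> y] by (simp add: mult_left_mono mult.left_commute)
  then show ?thesis unfolding second_difference .
qed

lemma rho_second_difference:
  assumes "0 < \<delta>" "0 \<le> \<alpha> - \<delta>" "\<alpha> + \<delta> \<le> 1" "0 \<le> t" "t \<le> \<delta>"
  shows "rho (\<alpha> + t) + rho (\<alpha> - t) - 2 * rho \<alpha> \<le> (t / \<delta>)\<^sup>2 * (rho (\<alpha> + \<delta>) + rho (\<alpha> - \<delta>) - 2 * rho \<alpha>)"
proof -
  have integrable: "integrable \<mu> (tilted (\<alpha> + t))" "integrable \<mu> (tilted (\<alpha> - t))" "integrable \<mu> (tilted \<alpha>)"
    "integrable \<mu> (tilted (\<alpha> + \<delta>))" "integrable \<mu> (tilted (\<alpha> - \<delta>))"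
    using assms by (auto intro!: integrable_tilted)
  have "rho (\<alpha> + t) + rho (\<alpha> - t) - 2 * rho \<alpha> = (\<integral>y. tilted (\<alpha> + t) y + tilted (\<alpha> - t) y - 2 * tilted \<alpha> y \<partial>\<mu>)"
    unfolding rho_def using integrable by simp
  also have "\<dots> \<le> (\<integral>y. (t / \<delta>)\<^sup>2 * (tilted (\<alpha> + \<delta>) y + tilted (\<alpha> - \<delta>) y - 2 * tilted \<alpha> y) \<partial>\<mu>)"
    using integrable assms by (intro integral_mono tilted_second_difference) auto
  also have "\<dots> = (t / \<delta>)\<^sup>2 * (rho (\<alpha> + \<delta>) + rho (\<alpha> - \<delta>) - 2 * rho \<alpha>)"
    unfolding rho_def using integrable by simp
  finally show ?thesis .
qed

lemma chernoff_eq_neg_ln_min_rho: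
  "\<exists>a\<in>{0..1}. (\<forall>\<beta>\<in>{0..1}. rho a \<le> rho \<beta>) \<and> chernoff = - ln (rho a)"
proof -
  obtain a where a: "a \<in> {0..1}" and min: "\<And>\<beta>. \<beta> \<in> {0..1} \<Longrightarrow> rho a \<le> rho \<beta>"
    using continuous_attains_inf[OF compact_Icc _ continuous_on_rho] by auto
  have "chernoff = (SUP \<beta>\<in>{0..1}. - ln (rho \<beta>))"
    unfolding wchernoff_def using rho_pos by (intro SUP_cong refl) (simp add: wrho_eq_rho less_imp_le)
  also have "\<dots> = - ln (rho a)"
    using a min rho_pos by (intro cSup_eq_maximum) auto
  finally show ?thesis using a min by blast
qed

lemma exp_neg_chernoff_le_rho: "\<beta> \<in> {0..1} \<Longrightarrow> exp (- chernoff) \<le> rho \<beta>"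
  using chernoff_eq_neg_ln_min_rho rho_pos by auto

lemma rho_attains_exp_neg_chernoff: "\<exists>\<alpha>\<in>{0..1}. rho \<alpha> = exp (- chernoff)"
  using chernoff_eq_neg_ln_min_rho rho_pos by auto

lemma prod_tilted:
  "(\<Prod>k<(n::nat). tilted \<beta> (x k)) = (\<Prod>k<n. \<phi> (x k)) *
     exp (\<beta> * (\<Sum>k<n. ln (pa (x k))) + (1 - \<beta>) * (\<Sum>k<n. ln (pb (x k))))"
proof -
  have "exp (\<beta> * (\<Sum>k<n. ln (pa (x k))) + (1 - \<beta>) * (\<Sum>k<n. ln (pb (x k))))
      = exp (\<Sum>k<n. \<beta> * ln (pa (x k)) + (1 - \<beta>) * ln (pb (x k)))"
    by (simp add: sum.distrib sum_distrib_left)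
  then show ?thesis by (simp add: tilted_def prod.distrib Transcendental.exp_sum)
qed

lemma pair_risk_integrand:
  "min (\<Prod>k<(n::nat). \<phi> (x k) * pa (x k)) (\<Prod>k<n. \<phi> (x k) * pb (x k)) =
     (\<Prod>k<n. \<phi> (x k)) * min (exp (\<Sum>k<n. ln (pa (x k)))) (exp (\<Sum>k<n. ln (pb (x k))))"
proof -
  have "min (\<Prod>k<n. \<phi> (x k) * pa (x k)) (\<Prod>k<n. \<phi> (x k) * pb (x k))
      = min (\<Prod>k<n. tilted 1 (x k)) (\<Prod>k<n. tilted 0 (x k))"
    by (simp add: tilted_one tilted_zero)
  then show ?thesis
    unfolding prod_tilted using phi_nonneg by (simp add: min_mult_distrib_left prod_nonneg)
qed

lemma nn_integral_prod_tilted: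
  "(\<integral>\<^sup>+x. ennreal (\<Prod>k<n. tilted \<beta> (x k)) \<partial>PiM {..<n} (\<lambda>_. \<mu>)) = wrho \<mu> \<phi> pa pb \<beta> ^ n"
proof -
  have "(\<integral>\<^sup>+x. ennreal (\<Prod>k<n. tilted \<beta> (x k)) \<partial>PiM {..<n} (\<lambda>_. \<mu>))
      = (\<integral>\<^sup>+x. (\<Prod>k<n. ennreal (tilted \<beta> (x k))) \<partial>PiM {..<n} (\<lambda>_. \<mu>))"
    by (simp add: tilted_nonneg prod_ennreal)
  also have "\<dots> = wrho \<mu> \<phi> pa pb \<beta> ^ n"
    unfolding wrho_eq_nn_integral_tilted by (rule nn_integral_PiM_prod_power[OF sigma_finite]) simp
  finally show ?thesis .
qed

lemma pair_risk_le_wrho_power: "\<beta> \<in> {0..1} \<Longrightarrow> pair_risk \<mu> \<phi> pa pb n \<le> wrho \<mu> \<phi> pa pb \<beta> ^ n"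
  unfolding pair_risk_def nn_integral_prod_tilted[symmetric]
proof (intro nn_integral_mono ennreal_leI)
  fix x :: "nat \<Rightarrow> 'a" assume "\<beta> \<in> {0..1}"
  define La Lb where "La = (\<Sum>k<n. ln (pa (x k)))" and "Lb = (\<Sum>k<n. ln (pb (x k)))"
  have "\<beta> * min La Lb + (1 - \<beta>) * min La Lb \<le> \<beta> * La + (1 - \<beta>) * Lb"
    using \<open>\<beta> \<in> {0..1}\<close> by (intro add_mono mult_left_mono) auto
  then have "min La Lb \<le> \<beta> * La + (1 - \<beta>) * Lb"
    by (simp add: algebra_simps)
  then have "min (exp La) (exp Lb) \<le> exp (\<beta> * La + (1 - \<beta>) * Lb)"
    by (simp add: min_def split: if_splits)
  then show "min (\<Prod>k<n. \<phi> (x k) * pa (x k)) (\<Prod>k<n. \<phi> (x k) * pb (x k)) \<le> (\<Prod>k<n. tilted \<beta> (x k))"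
    unfolding pair_risk_integrand prod_tilted La_def[symmetric] Lb_def[symmetric]
    using phi_nonneg by (intro mult_left_mono prod_nonneg) auto
qed

lemma pair_risk_le: "pair_risk \<mu> \<phi> pa pb n \<le> ennreal (exp (- chernoff) ^ n)"
proof -
  obtain \<alpha> where "\<alpha> \<in> {0..1}" "rho \<alpha> = exp (- chernoff)"
    using rho_attains_exp_neg_chernoff by blast
  then show ?thesis
    using pair_risk_le_wrho_power[of \<alpha> n] by (simp add: wrho_eq_rho ennreal_power)
qed

lemma measurable_pair_risk_integrand [measurable]:
  "(\<lambda>x. min (\<Prod>k<n. \<phi> (x k) * pa (x k)) (\<Prod>k<n. \<phi> (x k) * pb (x k))) \<in> borel_measurable (PiM {..<n} (\<lambda>_. \<mu>))"
  by measurable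

lemma prod_tilted_le_three_terms:
  assumes \<alpha>: "0 < \<alpha>" "\<alpha> < 1" and t: "0 < t\<^sub>1" "0 < t\<^sub>2"
  shows "(\<Prod>k<n. tilted \<alpha> (x k)) \<le> exp \<eta> ^ n * min (\<Prod>k<n. \<phi> (x k) * pa (x k)) (\<Prod>k<n. \<phi> (x k) * pb (x k))
    + exp (- (t\<^sub>1 * (\<eta> / \<alpha>))) ^ n * (\<Prod>k<n. tilted (\<alpha> + t\<^sub>1) (x k))
    + exp (- (t\<^sub>2 * (\<eta> / (1 - \<alpha>)))) ^ n * (\<Prod>k<n. tilted (\<alpha> - t\<^sub>2) (x k))"
proof -
  define La Lb where "La = (\<Sum>k<n. ln (pa (x k)))" and "Lb = (\<Sum>k<n. ln (pb (x k)))"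
  have "exp (\<alpha> * La + (1 - \<alpha>) * Lb) \<le> exp (n * \<eta>) * min (exp La) (exp Lb)
      + exp (- (t\<^sub>1 * (n * \<eta> / \<alpha>))) * exp ((\<alpha> + t\<^sub>1) * La + (1 - (\<alpha> + t\<^sub>1)) * Lb)
      + exp (- (t\<^sub>2 * (n * \<eta> / (1 - \<alpha>)))) * exp ((\<alpha> - t\<^sub>2) * La + (1 - (\<alpha> - t\<^sub>2)) * Lb)"
    using \<alpha> t by (intro exp_convex_comb_le_three_terms) auto
  moreover have "exp (n * \<eta>) = exp \<eta> ^ n"
    "exp (- (t\<^sub>1 * (n * \<eta> / \<alpha>))) = exp (- (t\<^sub>1 * (\<eta> / \<alpha>))) ^ n"
    "exp (- (t\<^sub>2 * (n * \<eta> / (1 - \<alpha>)))) = exp (- (t\<^sub>2 * (\<eta> / (1 - \<alpha>)))) ^ n"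
    by (simp_all add: mult.commute mult.left_commute flip: exp_of_nat_mult)
  ultimately have "exp (\<alpha> * La + (1 - \<alpha>) * Lb) \<le> exp \<eta> ^ n * min (exp La) (exp Lb)
      + exp (- (t\<^sub>1 * (\<eta> / \<alpha>))) ^ n * exp ((\<alpha> + t\<^sub>1) * La + (1 - (\<alpha> + t\<^sub>1)) * Lb)
      + exp (- (t\<^sub>2 * (\<eta> / (1 - \<alpha>)))) ^ n * exp ((\<alpha> - t\<^sub>2) * La + (1 - (\<alpha> - t\<^sub>2)) * Lb)"
    by simp
  then have "(\<Prod>k<n. \<phi> (x k)) * exp (\<alpha> * La + (1 - \<alpha>) * Lb) \<le> (\<Prod>k<n. \<phi> (x k)) *
      (exp \<eta> ^ n * min (exp La) (exp Lb)
      + exp (- (t\<^sub>1 * (\<eta> / \<alpha>))) ^ n * exp ((\<alpha> + t\<^sub>1) * La + (1 - (\<alpha> + t\<^sub>1)) * Lb)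
      + exp (- (t\<^sub>2 * (\<eta> / (1 - \<alpha>)))) ^ n * exp ((\<alpha> - t\<^sub>2) * La + (1 - (\<alpha> - t\<^sub>2)) * Lb))"
    using phi_nonneg by (intro mult_left_mono prod_nonneg) auto
  then show ?thesis
    unfolding pair_risk_integrand prod_tilted La_def[symmetric] Lb_def[symmetric]
    by (simp only: distrib_left mult.left_commute[of "\<Prod>k<n. \<phi> (x k)"])
qed

lemma rho_power_le_three_terms:
  assumes \<alpha>: "0 < \<alpha>" "\<alpha> < 1" and t: "0 < t\<^sub>1" "\<alpha> + t\<^sub>1 \<le> 1" "0 < t\<^sub>2" "t\<^sub>2 \<le> \<alpha>"
  shows "ennreal (rho \<alpha> ^ n) \<le> ennreal (exp \<eta> ^ n) * pair_risk \<mu> \<phi> pa pb n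
    + ennreal ((exp (- (t\<^sub>1 * (\<eta> / \<alpha>))) * rho (\<alpha> + t\<^sub>1)) ^ n)
    + ennreal ((exp (- (t\<^sub>2 * (\<eta> / (1 - \<alpha>)))) * rho (\<alpha> - t\<^sub>2)) ^ n)"
proof -
  let ?P = "PiM {..<n} (\<lambda>_. \<mu>)"
  let ?G = "\<lambda>x. min (\<Prod>k<n. \<phi> (x k) * pa (x k)) (\<Prod>k<n. \<phi> (x k) * pb (x k))"
  let ?T = "\<lambda>\<beta> x. \<Prod>k<n. tilted \<beta> (x k)"
  define e\<^sub>1 e\<^sub>2 where "e\<^sub>1 = exp (- (t\<^sub>1 * (\<eta> / \<alpha>)))" and "e\<^sub>2 = exp (- (t\<^sub>2 * (\<eta> / (1 - \<alpha>))))"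
  have nonneg: "0 \<le> ?G x" "0 \<le> ?T \<beta> x" for \<beta> x
    using phi_nonneg pa_pos pb_pos tilted_nonneg by (auto intro!: prod_nonneg simp: less_imp_le)
  have pointwise: "ennreal (?T \<alpha> x) \<le> ennreal (exp \<eta> ^ n) * ?G x + ennreal (e\<^sub>1 ^ n) * ?T (\<alpha> + t\<^sub>1) x
      + ennreal (e\<^sub>2 ^ n) * ?T (\<alpha> - t\<^sub>2) x" for x
  proof -
    have "ennreal (?T \<alpha> x) \<le> ennreal (exp \<eta> ^ n * ?G x + e\<^sub>1 ^ n * ?T (\<alpha> + t\<^sub>1) x + e\<^sub>2 ^ n * ?T (\<alpha> - t\<^sub>2) x)"
      unfolding e\<^sub>1_def e\<^sub>2_def using \<alpha> t by (intro ennreal_leI prod_tilted_le_three_terms)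
    with nonneg show ?thesis
      by (simp add: e\<^sub>1_def e\<^sub>2_def ennreal_plus ennreal_mult add_nonneg_nonneg)
  qed
  have "ennreal (rho \<alpha> ^ n) = (\<integral>\<^sup>+x. ?T \<alpha> x \<partial>?P)"
    using \<alpha> rho_pos[of \<alpha>] by (simp add: nn_integral_prod_tilted wrho_eq_rho ennreal_power)
  also have "\<dots> \<le> (\<integral>\<^sup>+x. ennreal (exp \<eta> ^ n) * ?G x + ennreal (e\<^sub>1 ^ n) * ?T (\<alpha> + t\<^sub>1) x
      + ennreal (e\<^sub>2 ^ n) * ?T (\<alpha> - t\<^sub>2) x \<partial>?P)"
    by (intro nn_integral_mono pointwise)
  also have "\<dots> = ennreal (exp \<eta> ^ n) * (\<integral>\<^sup>+x. ?G x \<partial>?P) + ennreal (e\<^sub>1 ^ n) * (\<integral>\<^sup>+x. ?T (\<alpha> + t\<^sub>1) x \<partial>?P)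
      + ennreal (e\<^sub>2 ^ n) * (\<integral>\<^sup>+x. ?T (\<alpha> - t\<^sub>2) x \<partial>?P)"
    by (simp add: nn_integral_add nn_integral_cmult)
  also have "\<dots> = ennreal (exp \<eta> ^ n) * pair_risk \<mu> \<phi> pa pb n
      + ennreal ((e\<^sub>1 * rho (\<alpha> + t\<^sub>1)) ^ n) + ennreal ((e\<^sub>2 * rho (\<alpha> - t\<^sub>2)) ^ n)"
    using \<alpha> t rho_pos[of "\<alpha> + t\<^sub>1"] rho_pos[of "\<alpha> - t\<^sub>2"]
    by (simp add: pair_risk_def nn_integral_prod_tilted wrho_eq_rho e\<^sub>1_def e\<^sub>2_def
        power_mult_distrib ennreal_mult' ennreal_power)
  finally show ?thesis unfolding e\<^sub>1_def e\<^sub>2_def .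
qed

lemma pair_risk_lower_bound:
  assumes "0 < \<eta>"
  shows "\<forall>\<^sub>F n in sequentially. ennreal (exp (- (chernoff + \<eta>)) ^ n / 2) \<le> pair_risk \<mu> \<phi> pa pb n"
proof -
  obtain \<alpha> t\<^sub>1 t\<^sub>2 where tilt: "tilt_parameters rho \<eta> \<alpha> t\<^sub>1 t\<^sub>2"
    using exists_tilt_parameters[OF continuous_on_rho rho_pos rho_second_difference \<open>0 < \<eta>\<close>] by blast
  then have \<alpha>: "0 < \<alpha>" "\<alpha> < 1" and t: "0 < t\<^sub>1" "\<alpha> + t\<^sub>1 \<le> 1" "0 < t\<^sub>2" "t\<^sub>2 \<le> \<alpha>"
    unfolding tilt_parameters_def by auto
  define r c\<^sub>1 c\<^sub>2 where "r = rho \<alpha>" and "c\<^sub>1 = exp (- (t\<^sub>1 * (\<eta> / \<alpha>))) * rho (\<alpha> + t\<^sub>1)"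
    and "c\<^sub>2 = exp (- (t\<^sub>2 * (\<eta> / (1 - \<alpha>)))) * rho (\<alpha> - t\<^sub>2)"
  have "0 < r" "0 \<le> c\<^sub>1" "c\<^sub>1 < r" "0 \<le> c\<^sub>2" "c\<^sub>2 < r"
    using tilt rho_pos[of \<alpha>] rho_pos[of "\<alpha> + t\<^sub>1"] rho_pos[of "\<alpha> - t\<^sub>2"] \<alpha> t
    unfolding tilt_parameters_def r_def c\<^sub>1_def c\<^sub>2_def by auto
  then have "(\<lambda>n. (c\<^sub>1 / r) ^ n + (c\<^sub>2 / r) ^ n) \<longlonglongrightarrow> 0"
    by (intro tendsto_add_zero LIMSEQ_power_zero) auto
  then have "\<forall>\<^sub>F n in sequentially. (c\<^sub>1 / r) ^ n + (c\<^sub>2 / r) ^ n < 1 / 2"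
    by (rule order_tendstoD) simp
  then show ?thesis
  proof eventually_elim
    case (elim n)
    then have tails: "c\<^sub>1 ^ n + c\<^sub>2 ^ n \<le> r ^ n / 2"
      using \<open>0 < r\<close> by (simp add: power_divide field_simps)
    obtain a where a: "pair_risk \<mu> \<phi> pa pb n = ennreal a" "0 \<le> a"
      using pair_risk_le[of n] by (cases "pair_risk \<mu> \<phi> pa pb n" rule: ennreal_cases) (auto simp: top_unique)
    have "ennreal (r ^ n) \<le> ennreal (exp \<eta> ^ n) * ennreal a + ennreal (c\<^sub>1 ^ n) + ennreal (c\<^sub>2 ^ n)"
      using rho_power_le_three_terms[OF \<alpha> t, of n \<eta>] a unfolding r_def c\<^sub>1_def c\<^sub>2_def by simp
    also have "\<dots> = ennreal (exp \<eta> ^ n * a + c\<^sub>1 ^ n + c\<^sub>2 ^ n)"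
      using a \<open>0 \<le> c\<^sub>1\<close> \<open>0 \<le> c\<^sub>2\<close> by (simp add: ennreal_plus ennreal_mult add_nonneg_nonneg)
    finally have "r ^ n \<le> exp \<eta> ^ n * a + c\<^sub>1 ^ n + c\<^sub>2 ^ n"
      using a \<open>0 \<le> c\<^sub>1\<close> \<open>0 \<le> c\<^sub>2\<close> by (subst (asm) ennreal_le_iff) (auto intro!: add_nonneg_nonneg)
    then have "r ^ n / 2 \<le> exp \<eta> ^ n * a" using tails by linarith
    have "exp (- (chernoff + \<eta>)) ^ n / 2 = exp (- \<eta>) ^ n * (exp (- chernoff) ^ n / 2)"
      by (simp add: exp_add[symmetric] power_mult_distrib[symmetric] add.commute)
    also have "\<dots> \<le> exp (- \<eta>) ^ n * (r ^ n / 2)"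
      using \<alpha> exp_neg_chernoff_le_rho[of \<alpha>] unfolding r_def by (intro mult_left_mono divide_right_mono power_mono) auto
    also have "\<dots> \<le> exp (- \<eta>) ^ n * (exp \<eta> ^ n * a)"
      using \<open>r ^ n / 2 \<le> exp \<eta> ^ n * a\<close> by (intro mult_left_mono) auto
    also have "\<dots> = a"
      by (simp add: exp_minus power_inverse)
    finally show ?case using a by (simp add: ennreal_leI)
  qed
qed

end

section \<open>Multiple hypotheses\<close>

locale hypothesis_family =
  fixes \<mu> :: "'a measure" and \<phi> :: "'a \<Rightarrow> real" and p :: "nat \<Rightarrow> 'a \<Rightarrow> real" and M :: nat
  assumes two_le_M: "2 \<le> M"
    and sigma_finite: "sigma_finite_measure \<mu>"
    and p_measurable: "\<And>i. i \<in> {1..M} \<Longrightarrow> p i \<in> borel_measurable \<mu>"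
    and p_pos: "\<And>i x. i \<in> {1..M} \<Longrightarrow> 0 < p i x"
    and phi_measurable [measurable]: "\<phi> \<in> borel_measurable \<mu>"
    and phi_nonneg: "\<And>x. 0 \<le> \<phi> x"
    and wrho_pos_finite: "\<And>i j \<alpha>. 1 \<le> i \<Longrightarrow> i < j \<Longrightarrow> j \<le> M \<Longrightarrow> \<alpha> \<in> {0..1} \<Longrightarrow>
      0 < wrho \<mu> \<phi> (p i) (p j) \<alpha> \<and> wrho \<mu> \<phi> (p i) (p j) \<alpha> < \<infinity>"
begin

definition pairs :: "(nat \<times> nat) set" where
  "pairs = {(i, j). 1 \<le> i \<and> i < j \<and> j \<le> M}"

lemma finite_pairs: "finite pairs"
  by (rule finite_subset[of _ "{1..M} \<times> {1..M}"]) (auto simp: pairs_def)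

lemma pairs_nonempty: "pairs \<noteq> {}"
proof -
  have "(1, 2) \<in> pairs" using two_le_M by (simp add: pairs_def)
  then show ?thesis by blast
qed

lemma chernoff_pair_of_pairs: "(a, b) \<in> pairs \<Longrightarrow> chernoff_pair \<mu> \<phi> (p a) (p b)"
  unfolding pairs_def
  by (intro chernoff_pair.intro sigma_finite phi_measurable phi_nonneg p_measurable p_pos wrho_pos_finite) auto

lemma wCM_eq_Min: "wCM \<mu> \<phi> p M = Min ((\<lambda>(i, j). wchernoff \<mu> \<phi> (p i) (p j)) ` pairs)"
  unfolding wCM_def pairs_def by (rule arg_cong[where f = Min]) auto

lemma wCM_le: "(a, b) \<in> pairs \<Longrightarrow> wCM \<mu> \<phi> p M \<le> wchernoff \<mu> \<phi> (p a) (p b)"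
  unfolding wCM_eq_Min using finite_pairs by (intro Min_le) auto

lemma wCM_attained: "\<exists>(a, b) \<in> pairs. wCM \<mu> \<phi> p M = wchernoff \<mu> \<phi> (p a) (p b)"
proof -
  have "wCM \<mu> \<phi> p M \<in> (\<lambda>(i, j). wchernoff \<mu> \<phi> (p i) (p j)) ` pairs"
    unfolding wCM_eq_Min using finite_pairs pairs_nonempty by (intro Min_in) auto
  then show ?thesis by auto
qed

lemma tests_nonempty: "tests \<mu> M n \<noteq> {}"
proof -
  have "(\<lambda>_. 1) \<in> tests \<mu> M n" using two_le_M by (simp add: tests_def)
  then show ?thesis by blast
qed

lemma Lerr_nonneg: "0 \<le> Lerr \<mu> \<phi> p i n \<delta>"
  unfolding Lerr_def using phi_nonneg by (intro Bochner_Integration.integral_nonneg) (simp add: prod_nonneg)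

lemma nn_integral_phi_p_finite:
  assumes "i \<in> {1..M}"
  shows "(\<integral>\<^sup>+y. ennreal (\<phi> y * p i y) \<partial>\<mu>) < \<infinity>"
proof (cases "i < M")
  case True
  interpret P: chernoff_pair \<mu> \<phi> "p i" "p M"
    using True assms by (intro chernoff_pair_of_pairs) (auto simp: pairs_def)
  show ?thesis
    using P.wrho_pos_finite[of 1] unfolding P.wrho_eq_nn_integral_tilted P.tilted_one by simp
next
  case False
  interpret P: chernoff_pair \<mu> \<phi> "p 1" "p M"
    using two_le_M by (intro chernoff_pair_of_pairs) (auto simp: pairs_def)
  have "i = M" using False assms by simp
  then show ?thesis
    using P.wrho_pos_finite[of 0] unfolding P.wrho_eq_nn_integral_tilted P.tilted_zero by simp
qed

lemma Lerr_eq_nn_integral: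
  assumes i: "i \<in> {1..M}" and \<delta>: "\<delta> \<in> tests \<mu> M n"
  shows "ennreal (Lerr \<mu> \<phi> p i n \<delta>) =
    (\<integral>\<^sup>+x. ennreal ((\<Prod>k<n. \<phi> (x k) * p i (x k)) * (if \<delta> x \<noteq> i then 1 else 0)) \<partial>PiM {..<n} (\<lambda>_. \<mu>))"
proof -
  let ?P = "PiM {..<n} (\<lambda>_. \<mu>)"
  let ?g = "\<lambda>x. (\<Prod>k<n. \<phi> (x k) * p i (x k)) * (if \<delta> x \<noteq> i then 1 else 0 :: real)"
  note [measurable] = p_measurable[OF i]
  have [measurable]: "\<delta> \<in> measurable ?P (count_space {1..M})"
    using \<delta> unfolding tests_def sample_space_def .
  have "prodP \<mu> (p i) n = density ?P (\<lambda>x. \<Prod>k<n. ennreal (p i (x k)))"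
    unfolding prodP_def using sigma_finite
    by (intro PiM_density) (auto simp: product_sigma_finite_def)
  also have "\<dots> = density ?P (\<lambda>x. ennreal (\<Prod>k<n. p i (x k)))"
    using p_pos[OF i] by (simp add: prod_ennreal less_imp_le)
  finally have "Lerr \<mu> \<phi> p i n \<delta> = (\<integral>x. (\<Prod>k<n. p i (x k)) * ((\<Prod>k<n. \<phi> (x k)) * (if \<delta> x \<noteq> i then 1 else 0)) \<partial>?P)"
    unfolding Lerr_def using p_pos[OF i] by (simp add: integral_density prod_nonneg less_imp_le)
  also have "\<dots> = (\<integral>x. ?g x \<partial>?P)"
    by (simp add: prod.distrib mult_ac)
  finally have Lerr_eq: "Lerr \<mu> \<phi> p i n \<delta> = (\<integral>x. ?g x \<partial>?P)" .
  have g_nonneg: "0 \<le> ?g x" for x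
    using phi_nonneg p_pos[OF i] by (simp add: prod_nonneg less_imp_le)
  have "(\<integral>\<^sup>+x. ?g x \<partial>?P) \<le> (\<integral>\<^sup>+x. (\<Prod>k<n. ennreal (\<phi> (x k) * p i (x k))) \<partial>?P)"
    using phi_nonneg p_pos[OF i]
    by (intro nn_integral_mono) (simp add: prod_ennreal prod_nonneg less_imp_le ennreal_leI)
  also have "\<dots> = (\<integral>\<^sup>+y. ennreal (\<phi> y * p i y) \<partial>\<mu>) ^ n"
    by (rule nn_integral_PiM_prod_power[OF sigma_finite]) measurable
  also have "\<dots> < \<infinity>"
    using nn_integral_phi_p_finite[OF i] by (simp add: power_less_top_ennreal)
  finally have "integrable ?P ?g"
    using g_nonneg by (intro integrableI_nonneg) auto
  then show ?thesis
    unfolding Lerr_eq using g_nonneg by (intro nn_integral_eq_integral[symmetric]) auto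
qed

lemma measurable_Lerr_integrand [measurable]:
  assumes "i \<in> {1..M}" "\<delta> \<in> tests \<mu> M n"
  shows "(\<lambda>x. ennreal ((\<Prod>k<n. \<phi> (x k) * p i (x k)) * (if \<delta> x \<noteq> i then 1 else 0)))
    \<in> borel_measurable (PiM {..<n} (\<lambda>_. \<mu>))"
proof -
  note [measurable] = p_measurable[OF assms(1)]
  have [measurable]: "\<delta> \<in> measurable (PiM {..<n} (\<lambda>_. \<mu>)) (count_space {1..M})"
    using assms(2) unfolding tests_def sample_space_def .
  show ?thesis by measurable
qed

lemma pair_risk_le_Lerr_add:
  assumes ab: "(a, b) \<in> pairs" and \<delta>: "\<delta> \<in> tests \<mu> M n"
  shows "pair_risk \<mu> \<phi> (p a) (p b) n \<le> ennreal (Lerr \<mu> \<phi> p a n \<delta> + Lerr \<mu> \<phi> p b n \<delta>)"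
proof -
  have a: "a \<in> {1..M}" and b: "b \<in> {1..M}" and "a \<noteq> b" using ab by (auto simp: pairs_def)
  let ?L = "\<lambda>i x. (\<Prod>k<n. \<phi> (x k) * p i (x k))"
  have "pair_risk \<mu> \<phi> (p a) (p b) n \<le> (\<integral>\<^sup>+x. ennreal (?L a x * (if \<delta> x \<noteq> a then 1 else 0))
      + ennreal (?L b x * (if \<delta> x \<noteq> b then 1 else 0)) \<partial>PiM {..<n} (\<lambda>_. \<mu>))"
    unfolding pair_risk_def
  proof (intro nn_integral_mono)
    fix x
    have "0 \<le> ?L a x" "0 \<le> ?L b x"
      using phi_nonneg p_pos a b by (auto intro!: prod_nonneg simp: less_imp_le)
    then show "ennreal (min (?L a x) (?L b x)) \<le> ennreal (?L a x * (if \<delta> x \<noteq> a then 1 else 0))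
        + ennreal (?L b x * (if \<delta> x \<noteq> b then 1 else 0))"
      using \<open>a \<noteq> b\<close> by (cases "\<delta> x = a") (auto simp: add_increasing2 add_increasing ennreal_leI)
  qed
  also have "\<dots> = ennreal (Lerr \<mu> \<phi> p a n \<delta>) + ennreal (Lerr \<mu> \<phi> p b n \<delta>)"
    using a b \<delta> by (simp add: nn_integral_add Lerr_eq_nn_integral)
  also have "\<dots> = ennreal (Lerr \<mu> \<phi> p a n \<delta> + Lerr \<mu> \<phi> p b n \<delta>)"
    using Lerr_nonneg by (simp add: ennreal_plus)
  finally show ?thesis .
qed

definition ml_test :: "nat \<Rightarrow> (nat \<Rightarrow> 'a) \<Rightarrow> nat" where
  "ml_test n x = (LEAST i. i \<in> {1..M} \<and> (\<forall>j\<in>{1..M}. (\<Prod>k<n. p j (x k)) \<le> (\<Prod>k<n. p i (x k))))"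

lemma ml_test_maximal:
  "ml_test n x \<in> {1..M} \<and> (\<forall>j\<in>{1..M}. (\<Prod>k<n. p j (x k)) \<le> (\<Prod>k<n. p (ml_test n x) (x k)))"
proof -
  let ?L = "\<lambda>i. \<Prod>k<n. p i (x k)"
  have "Max (?L ` {1..M}) \<in> ?L ` {1..M}"
    using two_le_M by (intro Max_in) auto
  then obtain i where i: "i \<in> {1..M}" and max: "?L i = Max (?L ` {1..M})"
    by (rule imageE) simp
  have "\<forall>j\<in>{1..M}. ?L j \<le> ?L i"
    unfolding max by (simp add: Max_ge)
  with i have "\<exists>i. i \<in> {1..M} \<and> (\<forall>j\<in>{1..M}. ?L j \<le> ?L i)" by blast
  from LeastI_ex[OF this] show ?thesis unfolding ml_test_def .
qed

lemma ml_test_in_tests: "ml_test n \<in> tests \<mu> M n"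
proof -
  let ?P = "PiM {..<n} (\<lambda>_. \<mu>)"
  have L_measurable: "(\<lambda>x. \<Prod>k<n. p j (x k)) \<in> borel_measurable ?P" if "j \<in> {1..M}" for j
    using p_measurable[OF that] by measurable
  have "Measurable.pred ?P (\<lambda>x. i \<in> {1..M} \<and> (\<forall>j\<in>{1..M}. (\<Prod>k<n. p j (x k)) \<le> (\<Prod>k<n. p i (x k))))" for i
  proof (cases "i \<in> {1..M}")
    case True
    have "Measurable.pred ?P (\<lambda>x. (\<Prod>k<n. p j (x k)) \<le> (\<Prod>k<n. p i (x k)))" if "j \<in> {1..M}" for j
      unfolding pred_def using L_measurable[OF that] L_measurable[OF True] by (rule borel_measurable_le)
    then have "Measurable.pred ?P (\<lambda>x. \<forall>j\<in>{1..M}. (\<Prod>k<n. p j (x k)) \<le> (\<Prod>k<n. p i (x k)))"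
      by (intro pred_intros_finite) auto
    then show ?thesis using True by (simp only: simp_thms)
  next
    case False
    then have "(\<lambda>x. i \<in> {1..M} \<and> (\<forall>j\<in>{1..M}. (\<Prod>k<n. p j (x k)) \<le> (\<Prod>k<n. p i (x k)))) = (\<lambda>x. False)"
      by blast
    moreover have "Measurable.pred ?P (\<lambda>x. False)" by (rule measurable_const) simp
    ultimately show ?thesis by (simp only:)
  qed
  then have "(\<lambda>x. ml_test n x) \<in> measurable ?P (count_space UNIV)"
    unfolding ml_test_def by (rule measurable_Least)
  moreover have "ml_test n \<in> space ?P \<rightarrow> {1..M}"
    using ml_test_maximal by blast
  ultimately show ?thesis
    unfolding tests_def sample_space_def by (intro measurable_count_space_extend[of "{1..M}" UNIV]) auto
qed

lemma pair_risk_le_exp_neg_wCM: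
  assumes "(a, b) \<in> pairs"
  shows "pair_risk \<mu> \<phi> (p a) (p b) n \<le> ennreal (exp (- wCM \<mu> \<phi> p M) ^ n)"
proof -
  interpret P: chernoff_pair \<mu> \<phi> "p a" "p b" using assms by (rule chernoff_pair_of_pairs)
  have "exp (- wchernoff \<mu> \<phi> (p a) (p b)) ^ n \<le> exp (- wCM \<mu> \<phi> p M) ^ n"
    using wCM_le[OF assms] by (intro power_mono) auto
  then show ?thesis using P.pair_risk_le[of n] by (meson ennreal_leI order_trans)
qed

lemma Lerr_ml_test_le:
  assumes i: "i \<in> {1..M}"
  shows "Lerr \<mu> \<phi> p i n (ml_test n) \<le> real (card pairs) * exp (- wCM \<mu> \<phi> p M) ^ n"
proof -
  let ?P = "PiM {..<n} (\<lambda>_. \<mu>)"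
  let ?L = "\<lambda>j x. \<Prod>k<n. \<phi> (x k) * p j (x k)"
  let ?E = "exp (- wCM \<mu> \<phi> p M) ^ n"
  have pointwise: "ennreal (?L i x * (if ml_test n x \<noteq> i then 1 else 0))
      \<le> (\<Sum>(a, b)\<in>pairs. ennreal (min (?L a x) (?L b x)))" for x
  proof (cases "ml_test n x = i")
    case False
    define m where "m = ml_test n x"
    have m: "m \<in> {1..M}" and "(\<Prod>k<n. p i (x k)) \<le> (\<Prod>k<n. p m (x k))"
      using ml_test_maximal i unfolding m_def by auto
    then have "?L i x \<le> ?L m x"
      unfolding prod.distrib using phi_nonneg by (intro mult_left_mono prod_nonneg) auto
    then have "?L i x * (if ml_test n x \<noteq> i then 1 else 0) = min (?L (min i m) x) (?L (max i m) x)"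
      using False unfolding m_def by (cases "i \<le> ml_test n x") (auto simp: min_def max_def)
    moreover have "(min i m, max i m) \<in> pairs"
      using False i m unfolding m_def pairs_def by auto
    ultimately show ?thesis
      using member_le_sum[of "(min i m, max i m)" pairs "\<lambda>(a, b). ennreal (min (?L a x) (?L b x))"] finite_pairs
      by simp
  qed simp
  have [measurable]: "(\<lambda>x. ennreal (min (?L a x) (?L b x))) \<in> borel_measurable ?P" if "(a, b) \<in> pairs" for a b
    using chernoff_pair.measurable_pair_risk_integrand[OF chernoff_pair_of_pairs[OF that]] by measurable
  have "ennreal (Lerr \<mu> \<phi> p i n (ml_test n)) \<le> (\<integral>\<^sup>+x. (\<Sum>(a, b)\<in>pairs. ennreal (min (?L a x) (?L b x))) \<partial>?P)"
    unfolding Lerr_eq_nn_integral[OF i ml_test_in_tests] by (intro nn_integral_mono pointwise)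
  also have "\<dots> = (\<Sum>(a, b)\<in>pairs. pair_risk \<mu> \<phi> (p a) (p b) n)"
    unfolding pair_risk_def split_beta by (rule nn_integral_sum) (auto simp: split_beta')
  also have "\<dots> \<le> (\<Sum>(a, b)\<in>pairs. ennreal ?E)"
    by (intro sum_mono) (auto intro: pair_risk_le_exp_neg_wCM)
  also have "\<dots> = ennreal (real (card pairs) * ?E)"
    by (simp add: ennreal_of_nat_eq_real_of_nat ennreal_mult)
  finally show ?thesis by (simp add: ennreal_le_iff)
qed

lemma Lstar_le: "Lstar \<mu> \<phi> p M n \<le> real M * real (card pairs) * exp (- wCM \<mu> \<phi> p M) ^ n"
proof -
  have "Lstar \<mu> \<phi> p M n \<le> (\<Sum>i\<in>{1..M}. Lerr \<mu> \<phi> p i n (ml_test n))"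
    unfolding Lstar_def using Lerr_nonneg
    by (intro cINF_lower ml_test_in_tests bdd_belowI2[of _ 0] sum_nonneg) auto
  also have "\<dots> \<le> (\<Sum>i\<in>{1..M}. real (card pairs) * exp (- wCM \<mu> \<phi> p M) ^ n)"
    by (intro sum_mono Lerr_ml_test_le)
  finally show ?thesis by simp
qed

lemma Lstar_lower_bound:
  assumes "0 < \<eta>"
  shows "\<forall>\<^sub>F n in sequentially. exp (- (wCM \<mu> \<phi> p M + \<eta>)) ^ n / 2 \<le> Lstar \<mu> \<phi> p M n"
proof -
  obtain a b where ab: "(a, b) \<in> pairs" and wCM_eq: "wCM \<mu> \<phi> p M = wchernoff \<mu> \<phi> (p a) (p b)"
    using wCM_attained by blast
  interpret P: chernoff_pair \<mu> \<phi> "p a" "p b" using ab by (rule chernoff_pair_of_pairs)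
  have "a \<in> {1..M}" "b \<in> {1..M}" "a \<noteq> b" using ab by (auto simp: pairs_def)
  show ?thesis
    using P.pair_risk_lower_bound[OF \<open>0 < \<eta>\<close>]
  proof eventually_elim
    case (elim n)
    show ?case
      unfolding Lstar_def
    proof (rule cINF_greatest[OF tests_nonempty])
      fix \<delta> assume \<delta>: "\<delta> \<in> tests \<mu> M n"
      have "ennreal (exp (- (wCM \<mu> \<phi> p M + \<eta>)) ^ n / 2) \<le> ennreal (Lerr \<mu> \<phi> p a n \<delta> + Lerr \<mu> \<phi> p b n \<delta>)"
        unfolding wCM_eq using elim pair_risk_le_Lerr_add[OF ab \<delta>] by (rule order_trans)
      then have "exp (- (wCM \<mu> \<phi> p M + \<eta>)) ^ n / 2 \<le> Lerr \<mu> \<phi> p a n \<delta> + Lerr \<mu> \<phi> p b n \<delta>"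
        using Lerr_nonneg by (subst (asm) ennreal_le_iff) (auto intro: add_nonneg_nonneg)
      also have "\<dots> = (\<Sum>i\<in>{a, b}. Lerr \<mu> \<phi> p i n \<delta>)"
        using \<open>a \<noteq> b\<close> by simp
      also have "\<dots> \<le> (\<Sum>i\<in>{1..M}. Lerr \<mu> \<phi> p i n \<delta>)"
        using \<open>a \<in> {1..M}\<close> \<open>b \<in> {1..M}\<close> Lerr_nonneg by (intro sum_mono2) auto
      finally show "exp (- (wCM \<mu> \<phi> p M + \<eta>)) ^ n / 2 \<le> (\<Sum>i\<in>{1..M}. Lerr \<mu> \<phi> p i n \<delta>)" .
    qed
  qed
qed


lemma Min_weights_pos:
  assumes "\<And>i. i \<in> {1..M} \<Longrightarrow> 0 < w i"
  shows "0 < (MIN i\<in>{1..M}. w i)"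
  using two_le_M assms by (subst Min_gr_iff) auto

lemma Max_weights_pos:
  assumes "\<And>i. i \<in> {1..M} \<Longrightarrow> 0 < w i"
  shows "0 < (MAX i\<in>{1..M}. w i)"
  using two_le_M assms by (subst Max_gr_iff) auto

lemma Lstar_w_between:
  assumes w_pos: "\<And>i. i \<in> {1..M} \<Longrightarrow> 0 < w i"
  shows "(MIN i\<in>{1..M}. w i) * Lstar \<mu> \<phi> p M n \<le> Lstar_w \<mu> \<phi> p M w n"
    and "Lstar_w \<mu> \<phi> p M w n \<le> (MAX i\<in>{1..M}. w i) * Lstar \<mu> \<phi> p M n"
proof -
  let ?wmin = "MIN i\<in>{1..M}. w i" and ?wmax = "MAX i\<in>{1..M}. w i"
  have bounds: "?wmin \<le> w i" "w i \<le> ?wmax" if "i \<in> {1..M}" for i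
    using that by (auto intro: Min_le Max_ge)
  have "0 < ?wmin" using w_pos by (rule Min_weights_pos)
  have "0 < ?wmax" using w_pos by (rule Max_weights_pos)
  show "?wmin * Lstar \<mu> \<phi> p M n \<le> Lstar_w \<mu> \<phi> p M w n"
    unfolding Lstar_def Lstar_w_def
    by (rule INF_weighted_sum_ge[OF tests_nonempty Lerr_nonneg bounds(1)]) (use \<open>0 < ?wmin\<close> in auto)
  show "Lstar_w \<mu> \<phi> p M w n \<le> ?wmax * Lstar \<mu> \<phi> p M n"
    unfolding Lstar_def Lstar_w_def
    by (rule INF_weighted_sum_le[OF tests_nonempty Lerr_nonneg _ bounds(2) \<open>0 < ?wmax\<close>])
      (use w_pos in \<open>auto intro: less_imp_le\<close>)
qed

lemma tendsto_exponent_Lstar_w: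
  assumes w_pos: "\<And>i. i \<in> {1..M} \<Longrightarrow> 0 < w i"
  shows "(\<lambda>n. - (1 / real n) * ln (Lstar_w \<mu> \<phi> p M w n)) \<longlonglongrightarrow> wCM \<mu> \<phi> p M"
proof (rule exponent_tendsto_of_exp_bounds)
  let ?wmin = "MIN i\<in>{1..M}. w i" and ?wmax = "MAX i\<in>{1..M}. w i"
  fix n
  have "Lstar_w \<mu> \<phi> p M w n \<le> ?wmax * Lstar \<mu> \<phi> p M n"
    by (rule Lstar_w_between(2)[of w, OF w_pos])
  also have "\<dots> \<le> ?wmax * (real M * real (card pairs) * exp (- wCM \<mu> \<phi> p M) ^ n)"
    using Lstar_le Max_weights_pos[of w, OF w_pos] by (intro mult_left_mono) auto
  finally show "Lstar_w \<mu> \<phi> p M w n \<le> ?wmax * (real M * real (card pairs)) * exp (- wCM \<mu> \<phi> p M) ^ n"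
    by (simp add: mult.assoc)
next
  let ?wmin = "MIN i\<in>{1..M}. w i"
  show "0 < ?wmin / 2"
    using Min_weights_pos[of w, OF w_pos] by simp
  fix \<eta> :: real assume "0 < \<eta>"
  show "\<forall>\<^sub>F n in sequentially. ?wmin / 2 * exp (- (wCM \<mu> \<phi> p M + \<eta>)) ^ n \<le> Lstar_w \<mu> \<phi> p M w n"
    using Lstar_lower_bound[OF \<open>0 < \<eta>\<close>]
  proof eventually_elim
    case (elim n)
    then have "?wmin * (exp (- (wCM \<mu> \<phi> p M + \<eta>)) ^ n / 2) \<le> ?wmin * Lstar \<mu> \<phi> p M n"
      using Min_weights_pos[of w, OF w_pos] by (intro mult_left_mono) auto
    then show ?case using Lstar_w_between(1)[of w, OF w_pos, where n = n] by simp
  qed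
qed
end

theorem mainTheorem13:
  fixes \<mu> :: "'a::polish_space measure"
    and p :: "nat \<Rightarrow> 'a \<Rightarrow> real"
    and \<phi> :: "'a \<Rightarrow> real"
    and w :: "nat \<Rightarrow> real"
    and M :: nat
  assumes M2: "M \<ge> 2"
    and sets_mu: "sets \<mu> = sets borel"
    and sfin: "sigma_finite_measure \<mu>"
    and p_meas: "\<And>i. i \<in> {1..M} \<Longrightarrow> p i \<in> borel_measurable \<mu>"
    and p_pos: "\<And>i x. i \<in> {1..M} \<Longrightarrow> p i x > 0"
    and p_prob: "\<And>i. i \<in> {1..M} \<Longrightarrow> (\<integral>\<^sup>+ x. ennreal (p i x) \<partial>\<mu>) = 1"
    and phi_meas: "\<phi> \<in> borel_measurable \<mu>"
    and phi_nonneg: "\<And>x. \<phi> x \<ge> 0"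
    and rho_fin: "\<And>i j \<alpha>. 1 \<le> i \<Longrightarrow> i < j \<Longrightarrow> j \<le> M \<Longrightarrow> \<alpha> \<in> {0..1} \<Longrightarrow>
                    0 < wrho \<mu> \<phi> (p i) (p j) \<alpha> \<and> wrho \<mu> \<phi> (p i) (p j) \<alpha> < \<infinity>"
    and w_pos: "\<And>i. i \<in> {1..M} \<Longrightarrow> w i > 0"
    and w_sum: "(\<Sum>i\<in>{1..M}. w i) = 1"
  shows "(\<forall>n. (MIN i\<in>{1..M}. w i) * Lstar \<mu> \<phi> p M n \<le> Lstar_w \<mu> \<phi> p M w n
            \<and> Lstar_w \<mu> \<phi> p M w n \<le> (MAX i\<in>{1..M}. w i) * Lstar \<mu> \<phi> p M n)
         \<and> (\<lambda>n. - (1 / real n) * ln (Lstar_w \<mu> \<phi> p M w n)) \<longlonglongrightarrow> wCM \<mu> \<phi> p M"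
proof -
  interpret hypothesis_family \<mu> \<phi> p M
    by (rule hypothesis_family.intro) (fact M2 sfin p_meas p_pos phi_meas phi_nonneg rho_fin)+
  show ?thesis
    using Lstar_w_between tendsto_exponent_Lstar_w w_pos by blast
qed

end
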